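(* Let $n\ge 1$ and let $\mathcal{I}$ be an interval hypergraph on $[n]$ containing all singletons $\{i\}$, $i\in[n]$. Then the hypergraphic poset $P_{\mathcal{I}}$ is a lattice if and only if $\mathcal{I}$ is closed under intersection, i.e. $I,J\in\mathcal{I}$ and $I\cap J\neq\varnothing$ imply $I\cap J\in\mathcal{I}$.
   Context: A hypergraph $\mathcal{H}$ on $[n]=\{1,\dots,n\}$ is a collection of subsets of $[n]$; by convention it contains all singletons. An interval hypergraph is a hypergraph all of whose members are intervals $[i,j]=\{i,i+1,\dots,j\}$. An orientation of $\mathcal{H}$ is a map $O:\mathcal{H}\to[n]$ with $O(H)\in H$ for all $H$. It is acyclic if there are no $H_1,\dots,H_k\in\mathcal{H}$, $k\ge2$, with $O(H_{i+1})\in H_i\setminus\{O(H_i)\}$ for $i\in[k-1]$ and $O(H_1)\in H_k\setminus\{O(H_k)\}$. Two orientations $O\neq O'$ are related by an increasing flip (from $O$ to $O'$) if there exist $1\le i<j\le n$ such that for all $H\in\mathcal{H}$: if $O(H)\ne O'(H)$ then $O(H)=i$ and $O'(H)=j$; and if $\{i,j\}\subseteq H$ then $O(H)=i\iff O'(H)=j$. The hypergraphic poset $P_{\mathcal{H}}$ is the transitive closure of the increasing flip relation on the set of acyclic orientations of $\mathcal{H}$ (equivalently, the transitive closure of the graph of the polytope $\sum_{H\in\mathcal{H}}\mathrm{conv}\{e_h:h\in H\}$ oriented in the direction $(n-1,n-3,\dots,1-n)$). *)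

theory Defs
  imports "HOL-Library.FuncSet"
begin

definition interval_hypergraph :: "nat \<Rightarrow> nat set set \<Rightarrow> bool" where
  "interval_hypergraph n \<H> \<longleftrightarrow>
     (\<forall>H\<in>\<H>. \<exists>i j. 1 \<le> i \<and> i \<le> j \<and> j \<le> n \<and> H = {i..j})"

definition contains_singletons :: "nat \<Rightarrow> nat set set \<Rightarrow> bool" where
  "contains_singletons n \<H> \<longleftrightarrow> (\<forall>i\<in>{1..n}. {i} \<in> \<H>)"

definition closed_under_intersection :: "nat set set \<Rightarrow> bool" where
  "closed_under_intersection \<H> \<longleftrightarrow>
     (\<forall>I\<in>\<H>. \<forall>J\<in>\<H>. I \<inter> J \<noteq> {} \<longrightarrow> I \<inter> J \<in> \<H>)"

definition orientations :: "nat set set \<Rightarrow> (nat set \<Rightarrow> nat) set" where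
  "orientations \<H> = (\<Pi>\<^sub>E H\<in>\<H>. H)"

(* A cycle H_1,...,H_k (k >= 2), given as a list hs with hs!0 = H_1 *)
definition acyclic_orientation :: "nat set set \<Rightarrow> (nat set \<Rightarrow> nat) \<Rightarrow> bool" where
  "acyclic_orientation \<H> P \<longleftrightarrow> P \<in> orientations \<H> \<and>
     \<not> (\<exists>hs. length hs \<ge> 2 \<and> set hs \<subseteq> \<H> \<and>
          (\<forall>i. Suc i < length hs \<longrightarrow> P (hs ! Suc i) \<in> hs ! i - {P (hs ! i)}) \<and>
          P (hs ! 0) \<in> last hs - {P (last hs)})"

definition increasing_flip ::
  "nat \<Rightarrow> nat set set \<Rightarrow> (nat set \<Rightarrow> nat) \<Rightarrow> (nat set \<Rightarrow> nat) \<Rightarrow> bool" where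
  "increasing_flip n \<H> P Q \<longleftrightarrow> P \<noteq> Q \<and>
     (\<exists>i j. 1 \<le> i \<and> i < j \<and> j \<le> n \<and>
        (\<forall>H\<in>\<H>. (P H \<noteq> Q H \<longrightarrow> P H = i \<and> Q H = j) \<and>
                 ({i, j} \<subseteq> H \<longrightarrow> (P H = i \<longleftrightarrow> Q H = j))))"

definition acyclic_orientations :: "nat set set \<Rightarrow> (nat set \<Rightarrow> nat) set" where
  "acyclic_orientations \<H> = {P. acyclic_orientation \<H> P}"

definition hg_less :: "nat \<Rightarrow> nat set set \<Rightarrow> ((nat set \<Rightarrow> nat) \<times> (nat set \<Rightarrow> nat)) set" where
  "hg_less n \<H> = {(P, Q). P \<in> acyclic_orientations \<H> \<and> Q \<in> acyclic_orientations \<H>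
                          \<and> increasing_flip n \<H> P Q}\<^sup>+"

definition hg_le :: "nat \<Rightarrow> nat set set \<Rightarrow> (nat set \<Rightarrow> nat) \<Rightarrow> (nat set \<Rightarrow> nat) \<Rightarrow> bool" where
  "hg_le n \<H> P Q \<longleftrightarrow> P = Q \<or> (P, Q) \<in> hg_less n \<H>"

definition is_lattice_on :: "'a set \<Rightarrow> ('a \<Rightarrow> 'a \<Rightarrow> bool) \<Rightarrow> bool" where
  "is_lattice_on A le \<longleftrightarrow>
     (\<forall>x\<in>A. le x x) \<and>
     (\<forall>x\<in>A. \<forall>y\<in>A. \<forall>z\<in>A. le x y \<longrightarrow> le y z \<longrightarrow> le x z) \<and>
     (\<forall>x\<in>A. \<forall>y\<in>A. le x y \<longrightarrow> le y x \<longrightarrow> x = y) \<and>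
     (\<forall>x\<in>A. \<forall>y\<in>A. \<exists>s\<in>A. le x s \<and> le y s \<and> (\<forall>u\<in>A. le x u \<longrightarrow> le y u \<longrightarrow> le s u)) \<and>
     (\<forall>x\<in>A. \<forall>y\<in>A. \<exists>m\<in>A. le m x \<and> le m y \<and> (\<forall>u\<in>A. le u x \<longrightarrow> le u y \<longrightarrow> le u m))"

definition hypergraphic_poset_is_lattice :: "nat \<Rightarrow> nat set set \<Rightarrow> bool" where
  "hypergraphic_poset_is_lattice n \<H> \<longleftrightarrow> is_lattice_on (acyclic_orientations \<H>) (hg_le n \<H>)"

end

theory Submission
  imports Defs
begin

(*
  Acyclic orientations of an interval hypergraph are exactly those without 2-cycles: in a
  longer cycle the edge with the largest head can be skipped, since the interval of its
  predecessor then contains the head of its successor. On acyclic orientations the flip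
  order is the componentwise order of heads: flips raise heads, and if P is componentwise
  below Q, raising the largest head i of P on edges where P < Q to the largest head j that
  Q puts on such edges headed at i is an increasing flip that stays acyclic and below Q.

  If the hypergraph is closed under intersection, the componentwise minimum of acyclic
  orientations does not increase when passing to a subedge containing its head, and then
  repeatedly lowering every head to the least head of such a subedge reaches the greatest
  acyclic orientation below it. This gives all meets; joins are meets of upper bounds,
  and the orientation by maxima is the top. Conversely, if edges {a..b} and {c..d} with
  a < c < b < d have no intersection edge {c..b}, explicit orientations P, Q, X, Y with
  P, Q below X and Y show that P and Q have no join: an upper bound of P and Q below X and Y
  would head {a..b} at c and {c..d} at b, a 2-cycle. As the singletons are edges, every
  missing intersection of two edges is of this form.
*)

lemma interval_edge:
  assumes "interval_hypergraph n \<I>" "H \<in> \<I>"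
  shows "\<exists>i j. 1 \<le> i \<and> i \<le> j \<and> j \<le> n \<and> H = {i..j}"
  using assms unfolding interval_hypergraph_def by blast

lemma interval_edge_convex:
  assumes "interval_hypergraph n \<I>" "H \<in> \<I>" "x \<in> H" "y \<in> H" "x \<le> z" "z \<le> y"
  shows "z \<in> H"
  using interval_edge[OF assms(1,2)] assms(3-6) by auto

lemma Min_Max_atLeastAtMost:
  fixes a b :: nat
  assumes "a \<le> b"
  shows "Min {a..b} = a" "Max {a..b} = b"
  using assms by (auto intro: Min_eqI Max_eqI)

lemma interval_edge_bounds:
  assumes "interval_hypergraph n \<I>" "H \<in> \<I>"
  shows "H \<subseteq> {1..n}" "finite H" "H \<noteq> {}" "Min H \<le> Max H" "H = {Min H..Max H}"
proof -
  obtain i j where ij: "1 \<le> i" "i \<le> j" "j \<le> n" "H = {i..j}"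
    using interval_edge[OF assms] by blast
  moreover note Min_Max_atLeastAtMost[OF ij(2)]
  ultimately show "H \<subseteq> {1..n}" "finite H" "H \<noteq> {}" "Min H \<le> Max H" "H = {Min H..Max H}"
    by auto
qed

lemma finite_interval_hypergraph:
  assumes "interval_hypergraph n \<I>"
  shows "finite \<I>"
proof (rule finite_subset)
  show "\<I> \<subseteq> Pow {1..n}" using interval_edge_bounds(1)[OF assms] by blast
qed simp

lemma orientation_head: "P \<in> orientations \<I> \<Longrightarrow> H \<in> \<I> \<Longrightarrow> P H \<in> H"
  unfolding orientations_def by auto

lemma orientations_eqI:
  "P \<in> orientations \<I> \<Longrightarrow> Q \<in> orientations \<I> \<Longrightarrow> (\<And>H. H \<in> \<I> \<Longrightarrow> P H = Q H) \<Longrightarrow> P = Q"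
  unfolding orientations_def by (rule PiE_ext)

lemma finite_orientations:
  assumes "finite \<I>" "\<And>H. H \<in> \<I> \<Longrightarrow> finite H"
  shows "finite (orientations \<I>)"
  unfolding orientations_def using assms by (rule finite_PiE)

section \<open>Acyclic orientations of interval hypergraphs\<close>

definition closed_walk :: "('a \<Rightarrow> 'a \<Rightarrow> bool) \<Rightarrow> 'a list \<Rightarrow> bool" where
  "closed_walk R xs \<longleftrightarrow> xs \<noteq> [] \<and> successively R xs \<and> R (last xs) (hd xs)"

lemma closed_walk_rotate1: "closed_walk R (x # xs) \<Longrightarrow> closed_walk R (xs @ [x])"
  by (cases "xs = []") (auto simp: closed_walk_def successively_append_iff successively_Cons)

lemma closed_walk_rotate: "closed_walk R xs \<Longrightarrow> closed_walk R (rotate n xs)"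
proof (induction n)
  case (Suc n)
  then show ?case by (cases "rotate n xs") (simp_all add: closed_walk_rotate1)
qed simp

lemma closed_walk_snoc:
  "xs \<noteq> [] \<Longrightarrow> closed_walk R (xs @ [y]) \<longleftrightarrow> successively R xs \<and> R (last xs) y \<and> R y (hd xs)"
  by (auto simp: closed_walk_def successively_append_iff)

lemma no_closed_walk_if_peaks_shortcut:
  fixes f :: "'a \<Rightarrow> 'b::linorder"
  assumes irrefl: "\<And>x. x \<in> A \<Longrightarrow> \<not> R x x"
    and shortcut: "\<And>x y z. x \<in> A \<Longrightarrow> y \<in> A \<Longrightarrow> z \<in> A \<Longrightarrow> R x y \<Longrightarrow> R y z \<Longrightarrow>
                     f x \<le> f y \<Longrightarrow> f z \<le> f y \<Longrightarrow> R x z"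
  shows "set xs \<subseteq> A \<Longrightarrow> \<not> closed_walk R xs"
proof (induction "length xs" arbitrary: xs rule: less_induct)
  case less
  show ?case
  proof
    assume walk: "closed_walk R xs"
    then have "xs \<noteq> []" unfolding closed_walk_def by simp
    then have "Max (f ` set xs) \<in> f ` set xs" by simp
    then obtain y where y: "y \<in> set xs" "f y = Max (f ` set xs)"
      by (metis imageE)
    then have y_max: "\<forall>x \<in> set xs. f x \<le> f y" by simp
    obtain us vs where xs: "xs = us @ y # vs" using y(1) by (meson split_list)
    define zs where "zs = vs @ us"
    have "rotate (length (us @ [y])) ((us @ [y]) @ vs) = zs @ [y]"
      unfolding zs_def using rotate_append[of "us @ [y]" vs] by simp
    then have walk': "closed_walk R (zs @ [y])"
      using closed_walk_rotate[OF walk, of "Suc (length us)"] xs by simp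
    have zs: "set zs \<subseteq> A" "\<forall>x \<in> set zs. f x \<le> f y" "y \<in> A" "length zs < length xs"
      using less.prems y(1) y_max xs unfolding zs_def by auto
    show False
    proof (cases "zs = []")
      case True
      then show False using walk' irrefl zs(3) unfolding closed_walk_def by simp
    next
      case False
      then have "successively R zs" "R (last zs) y" "R y (hd zs)"
        using walk' closed_walk_snoc[of zs R y] by simp_all
      moreover have "last zs \<in> set zs" "hd zs \<in> set zs" using False by simp_all
      moreover have "R (last zs) (hd zs)"
        using shortcut[of "last zs" y "hd zs"] zs calculation by blast
      ultimately have "closed_walk R zs" using False unfolding closed_walk_def by blast
      then show False using less.hyps zs(1,4) by blast
    qed
  qed
qed

definition two_cycle_free :: "'a set set \<Rightarrow> ('a set \<Rightarrow> 'a) \<Rightarrow> bool" where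
  "two_cycle_free \<I> P \<longleftrightarrow> (\<forall>H\<in>\<I>. \<forall>K\<in>\<I>. P H \<in> K \<longrightarrow> P K \<in> H \<longrightarrow> P H = P K)"

definition cycle_step :: "('a set \<Rightarrow> 'a) \<Rightarrow> 'a set \<Rightarrow> 'a set \<Rightarrow> bool" where
  "cycle_step P H K \<longleftrightarrow> P K \<in> H - {P H}"

lemma two_cycle_freeD:
  "two_cycle_free \<I> P \<Longrightarrow> H \<in> \<I> \<Longrightarrow> K \<in> \<I> \<Longrightarrow> P H \<in> K \<Longrightarrow> P K \<in> H \<Longrightarrow> P H = P K"
  unfolding two_cycle_free_def by blast

lemma acyclic_orientation_iff_no_closed_walk:
  "acyclic_orientation \<I> P \<longleftrightarrow> P \<in> orientations \<I> \<and>
     \<not> (\<exists>hs. 2 \<le> length hs \<and> set hs \<subseteq> \<I> \<and> closed_walk (cycle_step P) hs)"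
proof -
  have "closed_walk (cycle_step P) hs \<longleftrightarrow>
        (\<forall>i. Suc i < length hs \<longrightarrow> P (hs ! Suc i) \<in> hs ! i - {P (hs ! i)}) \<and>
        P (hs ! 0) \<in> last hs - {P (last hs)}" if "2 \<le> length hs" for hs
  proof -
    have "hd hs = hs ! 0" using that by (cases hs) simp_all
    then show ?thesis
      using that unfolding closed_walk_def successively_conv_nth cycle_step_def by auto
  qed
  then show ?thesis unfolding acyclic_orientation_def by (metis (no_types, lifting))
qed

lemma cycle_step_shortcut:
  assumes iv: "interval_hypergraph n \<I>" and P: "P \<in> orientations \<I>" "two_cycle_free \<I> P"
    and HKL: "H \<in> \<I>" "K \<in> \<I>" "L \<in> \<I>"
    and steps: "cycle_step P H K" "cycle_step P K L"
    and peak: "P H \<le> P K" "P L \<le> P K"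
  shows "cycle_step P H L"
proof -
  have KH: "P K \<in> H" "P K \<noteq> P H" and LK: "P L \<in> K" "P L \<noteq> P K"
    using steps unfolding cycle_step_def by auto
  have "P H \<notin> K"
    using P(2) HKL(1,2) KH unfolding two_cycle_free_def by metis
  have "P H < P L"
  proof (rule ccontr)
    assume "\<not> P H < P L"
    then have "P H \<in> K"
      using interval_edge_convex[OF iv HKL(2) LK(1) orientation_head[OF P(1) HKL(2)]] peak(1)
      by simp
    with \<open>P H \<notin> K\<close> show False ..
  qed
  then have "P L \<in> H"
    using interval_edge_convex[OF iv HKL(1) orientation_head[OF P(1) HKL(1)] KH(1)] peak(2)
    by simp
  with \<open>P H < P L\<close> show ?thesis unfolding cycle_step_def by simp
qed

lemma acyclic_orientations_eq:
  assumes iv: "interval_hypergraph n \<I>"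
  shows "acyclic_orientations \<I> = {P \<in> orientations \<I>. two_cycle_free \<I> P}"
proof -
  have "acyclic_orientation \<I> P \<longleftrightarrow> two_cycle_free \<I> P" if P: "P \<in> orientations \<I>" for P
  proof
    assume acyclic: "acyclic_orientation \<I> P"
    show "two_cycle_free \<I> P" unfolding two_cycle_free_def
    proof (intro ballI impI)
      fix H K assume HK: "H \<in> \<I>" "K \<in> \<I>" "P H \<in> K" "P K \<in> H"
      show "P H = P K"
      proof (rule ccontr)
        assume "P H \<noteq> P K"
        then have "closed_walk (cycle_step P) [H, K]"
          using HK unfolding closed_walk_def cycle_step_def by simp
        moreover have "2 \<le> length [H, K]" "set [H, K] \<subseteq> \<I>" using HK by simp_all
        ultimately show False
          using acyclic unfolding acyclic_orientation_iff_no_closed_walk by blast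
      qed
    qed
  next
    assume "two_cycle_free \<I> P"
    have "\<not> closed_walk (cycle_step P) hs" if "set hs \<subseteq> \<I>" for hs
    proof (rule no_closed_walk_if_peaks_shortcut[where f = P, OF _ _ that])
      show "\<not> cycle_step P H H" for H unfolding cycle_step_def by simp
    next
      fix H K L assume "H \<in> \<I>" "K \<in> \<I>" "L \<in> \<I>" "cycle_step P H K" "cycle_step P K L"
        "P H \<le> P K" "P L \<le> P K"
      then show "cycle_step P H L"
        using cycle_step_shortcut[OF iv P \<open>two_cycle_free \<I> P\<close>] by blast
    qed
    then show "acyclic_orientation \<I> P"
      using P unfolding acyclic_orientation_iff_no_closed_walk by blast
  qed
  then show ?thesis
    unfolding acyclic_orientations_def by (auto simp: acyclic_orientation_def)
qed

section \<open>The flip order is the componentwise order of heads\<close>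

definition pointwise_le :: "'a set \<Rightarrow> ('a \<Rightarrow> 'b::ord) \<Rightarrow> ('a \<Rightarrow> 'b) \<Rightarrow> bool" where
  "pointwise_le A f g \<longleftrightarrow> (\<forall>x\<in>A. f x \<le> g x)"

lemma pointwise_le_trans:
  fixes f :: "'a \<Rightarrow> 'b::preorder"
  shows "pointwise_le A f g \<Longrightarrow> pointwise_le A g h \<Longrightarrow> pointwise_le A f h"
  unfolding pointwise_le_def using order_trans by blast

lemma increasing_flip_pointwise_le: "increasing_flip n \<I> P Q \<Longrightarrow> pointwise_le \<I> P Q"
  unfolding increasing_flip_def pointwise_le_def by (metis less_imp_le order_refl)

lemma hg_less_pointwise_le:
  assumes "(P, Q) \<in> hg_less n \<I>"
  shows "pointwise_le \<I> P Q"
  using assms unfolding hg_less_def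
  by (induction rule: trancl_induct)
    (auto intro: pointwise_le_trans dest: increasing_flip_pointwise_le)

definition head_flip :: "'a set set \<Rightarrow> 'a \<Rightarrow> 'a \<Rightarrow> ('a set \<Rightarrow> 'a) \<Rightarrow> 'a set \<Rightarrow> 'a" where
  "head_flip \<I> i j P = restrict (\<lambda>H. if P H = i \<and> j \<in> H then j else P H) \<I>"

lemma head_flip_apply:
  "H \<in> \<I> \<Longrightarrow> head_flip \<I> i j P H = (if P H = i \<and> j \<in> H then j else P H)"
  unfolding head_flip_def by simp

lemma head_flip_orientation:
  assumes "P \<in> orientations \<I>"
  shows "head_flip \<I> i j P \<in> orientations \<I>"
  using assms unfolding orientations_def head_flip_def by auto

lemma increasing_flip_head_flip:
  assumes P: "P \<in> orientations \<I>" "two_cycle_free \<I> P"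
    and ij: "1 \<le> i" "i < j" "j \<le> n"
    and H0: "H0 \<in> \<I>" "P H0 = i" "j \<in> H0"
  shows "increasing_flip n \<I> P (head_flip \<I> i j P)"
proof -
  let ?P' = "head_flip \<I> i j P"
  have "?P' H0 \<noteq> P H0" using H0 ij by (simp add: head_flip_apply)
  then have "P \<noteq> ?P'" by auto
  moreover have flipped_from_i: "P H = i" if "H \<in> \<I>" "{i, j} \<subseteq> H" "?P' H = j" for H
  proof (rule ccontr)
    assume "P H \<noteq> i"
    then have "P H = j" using that by (simp add: head_flip_apply)
    then have "P H = P H0"
      using two_cycle_freeD[OF P(2) that(1) H0(1)] that(2) H0 by simp
    then show False using \<open>P H \<noteq> i\<close> H0(2) by simp
  qed
  moreover have "\<forall>H\<in>\<I>. (P H \<noteq> ?P' H \<longrightarrow> P H = i \<and> ?P' H = j) \<and>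
                        ({i, j} \<subseteq> H \<longrightarrow> (P H = i \<longleftrightarrow> ?P' H = j))"
  proof (rule ballI, rule conjI; rule impI)
    fix H assume H: "H \<in> \<I>"
    have P'H: "?P' H = (if P H = i \<and> j \<in> H then j else P H)" using H by (rule head_flip_apply)
    show "P H = i \<and> ?P' H = j" if "P H \<noteq> ?P' H" using that P'H by (simp split: if_splits)
    assume ij_H: "{i, j} \<subseteq> H"
    show "P H = i \<longleftrightarrow> ?P' H = j"
    proof
      assume "P H = i" then show "?P' H = j" using P'H ij_H by simp
    qed (rule flipped_from_i[OF H ij_H])
  qed
  ultimately show ?thesis
    unfolding increasing_flip_def using ij by blast
qed

context
  fixes n :: nat and \<I> :: "nat set set" and P Q :: "nat set \<Rightarrow> nat" and i j :: nat and H0 :: "nat set"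
  assumes iv: "interval_hypergraph n \<I>"
    and P: "P \<in> orientations \<I>" "two_cycle_free \<I> P"
    and Q: "Q \<in> orientations \<I>" "two_cycle_free \<I> Q"
    and P_le_Q: "pointwise_le \<I> P Q"
    and i_max: "\<And>H. H \<in> \<I> \<Longrightarrow> P H < Q H \<Longrightarrow> P H \<le> i"
    and j_max: "\<And>H. H \<in> \<I> \<Longrightarrow> P H = i \<Longrightarrow> i < Q H \<Longrightarrow> Q H \<le> j"
    and H0: "H0 \<in> \<I>" "P H0 = i" "Q H0 = j" "i < j"
begin

lemma target_head_on_flipped:
  assumes H: "H \<in> \<I>" "P H = i" "j \<in> H"
  shows "Q H = j"
proof -
  have "j \<le> Q H"
  proof (rule ccontr)
    assume "\<not> j \<le> Q H"
    moreover have "i \<le> Q H" using P_le_Q H unfolding pointwise_le_def by auto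
    ultimately have "Q H \<in> H0"
      using interval_edge_convex[OF iv H0(1) orientation_head[OF P(1) H0(1)]
          orientation_head[OF Q(1) H0(1)]] H0(2,3) by simp
    then have "Q H = Q H0" using two_cycle_freeD[OF Q(2) H(1) H0(1)] H0(3) H(3) by simp
    with \<open>\<not> j \<le> Q H\<close> H0(3) show False by simp
  qed
  moreover have "Q H \<le> j" using j_max[OF H(1,2)] \<open>j \<le> Q H\<close> H0(4) by simp
  ultimately show ?thesis by simp
qed

lemma head_flip_le_target: "pointwise_le \<I> (head_flip \<I> i j P) Q"
  unfolding pointwise_le_def
proof
  fix H assume H: "H \<in> \<I>"
  show "head_flip \<I> i j P H \<le> Q H"
    using target_head_on_flipped[OF H] P_le_Q H unfolding head_flip_apply[OF H] pointwise_le_def by auto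
qed

lemma flipped_unflipped_no_two_cycle:
  assumes HK: "H \<in> \<I>" "K \<in> \<I>" and flipped: "P H = i" "j \<in> H"
    and unflipped: "\<not> (P K = i \<and> j \<in> K)"
    and cycle: "j \<in> K" "P K \<in> H"
  shows "P K = j"
proof -
  have "i \<notin> K"
    using two_cycle_freeD[OF P(2) HK] flipped(1) unflipped cycle by auto
  have "i < P K"
  proof (rule ccontr)
    assume "\<not> i < P K"
    then have "i \<in> K"
      using interval_edge_convex[OF iv HK(2) orientation_head[OF P(1) HK(2)] cycle(1)] H0(4) by simp
    with \<open>i \<notin> K\<close> show False ..
  qed
  then have "Q K = P K"
    using i_max[OF HK(2)] P_le_Q HK(2) unfolding pointwise_le_def by force
  moreover have "Q H = j" using target_head_on_flipped[OF HK(1) flipped] .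
  ultimately show ?thesis
    using two_cycle_freeD[OF Q(2) HK] cycle by simp
qed

lemma head_flip_two_cycle_free: "two_cycle_free \<I> (head_flip \<I> i j P)"
  unfolding two_cycle_free_def
proof (intro ballI impI)
  fix H K assume HK: "H \<in> \<I>" "K \<in> \<I>"
    and cycle: "head_flip \<I> i j P H \<in> K" "head_flip \<I> i j P K \<in> H"
  consider "P H = i \<and> j \<in> H" "P K = i \<and> j \<in> K"
    | "P H = i \<and> j \<in> H" "\<not> (P K = i \<and> j \<in> K)"
    | "\<not> (P H = i \<and> j \<in> H)" "P K = i \<and> j \<in> K"
    | "\<not> (P H = i \<and> j \<in> H)" "\<not> (P K = i \<and> j \<in> K)"
    by blast
  then show "head_flip \<I> i j P H = head_flip \<I> i j P K"
  proof cases
    case 1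
    then show ?thesis by (simp add: head_flip_apply HK)
  next
    case 2
    then show ?thesis
      using flipped_unflipped_no_two_cycle[OF HK] cycle by (simp add: head_flip_apply HK)
  next
    case 3
    then show ?thesis
      using flipped_unflipped_no_two_cycle[OF HK(2,1)] cycle by (simp add: head_flip_apply HK)
  next
    case 4
    then have "head_flip \<I> i j P H = P H" "head_flip \<I> i j P K = P K"
      by (auto simp: head_flip_apply HK)
    then show ?thesis using two_cycle_freeD[OF P(2) HK] cycle by simp
  qed
qed

end

lemma exists_increasing_flip_towards:
  assumes iv: "interval_hypergraph n \<I>"
    and P: "P \<in> acyclic_orientations \<I>" and Q: "Q \<in> acyclic_orientations \<I>"
    and P_le_Q: "pointwise_le \<I> P Q" and "P \<noteq> Q"
  shows "\<exists>P' \<in> acyclic_orientations \<I>. increasing_flip n \<I> P P' \<and> pointwise_le \<I> P' Q"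
proof -
  have P': "P \<in> orientations \<I>" "two_cycle_free \<I> P"
    and Q': "Q \<in> orientations \<I>" "two_cycle_free \<I> Q"
    using P Q by (simp_all add: acyclic_orientations_eq[OF iv])
  define D where "D = {H \<in> \<I>. P H < Q H}"
  have "finite D" using finite_interval_hypergraph[OF iv] unfolding D_def by simp
  have "D \<noteq> {}"
  proof
    assume "D = {}"
    then have "P H = Q H" if "H \<in> \<I>" for H
      using that P_le_Q unfolding D_def pointwise_le_def by force
    with orientations_eqI[OF P'(1) Q'(1)] \<open>P \<noteq> Q\<close> show False by blast
  qed
  define i where "i = Max (P ` D)"
  define D_i where "D_i = {H \<in> D. P H = i}"
  have "i \<in> P ` D" unfolding i_def using \<open>finite D\<close> \<open>D \<noteq> {}\<close> by simp
  then have "finite D_i" "D_i \<noteq> {}" using \<open>finite D\<close> unfolding D_i_def by auto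
  define j where "j = Max (Q ` D_i)"
  have "j \<in> Q ` D_i" unfolding j_def using \<open>finite D_i\<close> \<open>D_i \<noteq> {}\<close> by simp
  then obtain H0 where H0: "H0 \<in> D_i" "Q H0 = j" by blast
  then have H0': "H0 \<in> \<I>" "P H0 = i" "i < j" unfolding D_i_def D_def by auto
  have i_max: "P H \<le> i" if "H \<in> \<I>" "P H < Q H" for H
    unfolding i_def using \<open>finite D\<close> that by (intro Max_ge) (auto simp: D_def)
  have j_max: "Q H \<le> j" if "H \<in> \<I>" "P H = i" "i < Q H" for H
    unfolding j_def using \<open>finite D_i\<close> that by (intro Max_ge) (auto simp: D_i_def D_def)
  note flip_facts = iv P' Q' P_le_Q i_max j_max H0'(1,2) H0(2) H0'(3)
  have "j \<in> H0" using orientation_head[OF Q'(1) H0'(1)] H0(2) by simp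
  moreover have "i \<in> H0" using orientation_head[OF P'(1) H0'(1)] H0'(2) by simp
  ultimately have "1 \<le> i" "j \<le> n" using interval_edge_bounds(1)[OF iv H0'(1)] by auto
  then have "increasing_flip n \<I> P (head_flip \<I> i j P)"
    using increasing_flip_head_flip[OF P' _ H0'(3) _ H0'(1,2) \<open>j \<in> H0\<close>] by blast
  moreover have "head_flip \<I> i j P \<in> acyclic_orientations \<I>"
    using head_flip_orientation[OF P'(1)] head_flip_two_cycle_free[OF flip_facts]
    unfolding acyclic_orientations_eq[OF iv] by blast
  moreover note head_flip_le_target[OF flip_facts]
  ultimately show ?thesis by blast
qed

lemma hg_le_if_pointwise_le:
  assumes iv: "interval_hypergraph n \<I>" and Q: "Q \<in> acyclic_orientations \<I>"
  shows "P \<in> acyclic_orientations \<I> \<Longrightarrow> pointwise_le \<I> P Q \<Longrightarrow> hg_le n \<I> P Q"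
proof (induction "\<Sum>H\<in>\<I>. Q H - P H" arbitrary: P rule: less_induct)
  case less
  show ?case
  proof (cases "P = Q")
    case False
    then obtain P' where P': "P' \<in> acyclic_orientations \<I>" "increasing_flip n \<I> P P'"
      "pointwise_le \<I> P' Q"
      using exists_increasing_flip_towards[OF iv less.prems(1) Q less.prems(2)] by blast
    have "(\<Sum>H\<in>\<I>. Q H - P' H) < (\<Sum>H\<in>\<I>. Q H - P H)"
    proof (rule sum_strict_mono_ex1[OF finite_interval_hypergraph[OF iv]])
      have P_le_P': "pointwise_le \<I> P P'" using P'(2) by (rule increasing_flip_pointwise_le)
      then show "\<forall>H\<in>\<I>. Q H - P' H \<le> Q H - P H"
        unfolding pointwise_le_def by (simp add: diff_le_mono2)
      have "P \<noteq> P'" using P'(2) unfolding increasing_flip_def by (rule conjunct1)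
      moreover have "P \<in> orientations \<I>" "P' \<in> orientations \<I>"
        using less.prems(1) P'(1) unfolding acyclic_orientations_eq[OF iv] by blast+
      ultimately obtain H where H: "H \<in> \<I>" "P H \<noteq> P' H" by (metis orientations_eqI)
      moreover have "P H \<le> P' H" "P' H \<le> Q H"
        using H(1) P_le_P' P'(3) unfolding pointwise_le_def by blast+
      ultimately have "Q H - P' H < Q H - P H"
        using diff_less_mono2[of "P H" "P' H" "Q H"] by simp
      then show "\<exists>H\<in>\<I>. Q H - P' H < Q H - P H" using H(1) by blast
    qed
    then have "hg_le n \<I> P' Q" by (rule less.hyps[OF _ P'(1,3)])
    moreover have "(P, P') \<in> hg_less n \<I>"
      using less.prems(1) P'(1,2) unfolding hg_less_def by (intro r_into_trancl) simp
    ultimately have "(P, Q) \<in> hg_less n \<I>"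
      unfolding hg_le_def hg_less_def using trancl_trans by fast
    then show ?thesis unfolding hg_le_def ..
  qed (simp add: hg_le_def)
qed

lemma hg_le_iff_pointwise_le:
  assumes "interval_hypergraph n \<I>"
    and "P \<in> acyclic_orientations \<I>" "Q \<in> acyclic_orientations \<I>"
  shows "hg_le n \<I> P Q \<longleftrightarrow> pointwise_le \<I> P Q"
proof
  show "pointwise_le \<I> P Q" if "hg_le n \<I> P Q"
    using that hg_less_pointwise_le unfolding hg_le_def pointwise_le_def by blast
qed (rule hg_le_if_pointwise_le[OF assms(1,3,2)])

section \<open>Meets in hypergraphs closed under intersection\<close>

lemma intersection_edge:
  "closed_under_intersection \<I> \<Longrightarrow> H \<in> \<I> \<Longrightarrow> K \<in> \<I> \<Longrightarrow> x \<in> H \<Longrightarrow> x \<in> K \<Longrightarrow>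
    H \<inter> K \<in> \<I>"
  unfolding closed_under_intersection_def by blast

definition subedge_descending :: "'a::ord set set \<Rightarrow> ('a set \<Rightarrow> 'a) \<Rightarrow> bool" where
  "subedge_descending \<I> w \<longleftrightarrow> (\<forall>H\<in>\<I>. \<forall>K\<in>\<I>. K \<subseteq> H \<longrightarrow> w H \<in> K \<longrightarrow> w K \<le> w H)"

definition descend :: "'a::linorder set set \<Rightarrow> ('a set \<Rightarrow> 'a) \<Rightarrow> 'a set \<Rightarrow> 'a" where
  "descend \<I> w = restrict (\<lambda>H. Min (w ` {K \<in> \<I>. K \<subseteq> H \<and> w H \<in> K})) \<I>"

context
  fixes n :: nat and \<I> :: "nat set set" and w :: "nat set \<Rightarrow> nat"
  assumes iv: "interval_hypergraph n \<I>" and w: "w \<in> orientations \<I>"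
begin

lemma descend_attained:
  assumes H: "H \<in> \<I>"
  shows "\<exists>L \<in> \<I>. L \<subseteq> H \<and> w H \<in> L \<and> descend \<I> w H = w L"
proof -
  let ?S = "w ` {K \<in> \<I>. K \<subseteq> H \<and> w H \<in> K}"
  have "finite ?S" using finite_interval_hypergraph[OF iv] by simp
  moreover have "?S \<noteq> {}" using H orientation_head[OF w H] by blast
  ultimately have "Min ?S \<in> ?S" by (rule Min_in)
  then show ?thesis using H unfolding descend_def by auto
qed

lemma descend_le:
  assumes "H \<in> \<I>" "K \<in> \<I>" "K \<subseteq> H" "w H \<in> K"
  shows "descend \<I> w H \<le> w K"
proof -
  let ?S = "w ` {K \<in> \<I>. K \<subseteq> H \<and> w H \<in> K}"
  have "finite ?S" using finite_interval_hypergraph[OF iv] by simp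
  moreover have "w K \<in> ?S" using assms by blast
  ultimately show ?thesis using assms(1) unfolding descend_def by simp
qed

lemma descend_le_self: "H \<in> \<I> \<Longrightarrow> descend \<I> w H \<le> w H"
  using descend_le orientation_head[OF w] by blast

lemma descend_orientation: "descend \<I> w \<in> orientations \<I>"
  unfolding orientations_def
proof
  fix H assume H: "H \<in> \<I>"
  obtain L where "L \<in> \<I>" "L \<subseteq> H" "descend \<I> w H = w L" using descend_attained[OF H] by blast
  then show "descend \<I> w H \<in> H" using orientation_head[OF w] by auto
qed (simp add: descend_def)

lemma le_descend_if_below:
  assumes P: "P \<in> orientations \<I>" "two_cycle_free \<I> P" and P_le_w: "pointwise_le \<I> P w"
    and H: "H \<in> \<I>"
  shows "P H \<le> descend \<I> w H"
proof (rule ccontr)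
  assume above: "\<not> P H \<le> descend \<I> w H"
  obtain K where K: "K \<in> \<I>" "K \<subseteq> H" "w H \<in> K" "descend \<I> w H = w K"
    using descend_attained[OF H] by blast
  have "P K \<in> K" "P K \<le> w K" "P H \<le> w H"
    using orientation_head[OF P(1) K(1)] P_le_w K(1) H unfolding pointwise_le_def by auto
  then have "P H \<in> K"
    using interval_edge_convex[OF iv K(1) \<open>P K \<in> K\<close> K(3), of "P H"] above K(4) by simp
  then have "P H = P K"
    using two_cycle_freeD[OF P(2) H K(1)] K(2) \<open>P K \<in> K\<close> by blast
  with above K(4) \<open>P K \<le> w K\<close> show False by simp
qed

lemma descend_subedge_descending:
  assumes closed: "closed_under_intersection \<I>" and desc: "subedge_descending \<I> w"
  shows "subedge_descending \<I> (descend \<I> w)"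
  unfolding subedge_descending_def
proof (intro ballI impI)
  fix H K assume H: "H \<in> \<I>" and K: "K \<in> \<I>" and "K \<subseteq> H" and in_K: "descend \<I> w H \<in> K"
  obtain L where L: "L \<in> \<I>" "L \<subseteq> H" "w H \<in> L" "descend \<I> w H = w L"
    using descend_attained[OF H] by blast
  have wL: "w L \<in> K" "w L \<in> L" using in_K L(4) orientation_head[OF w L(1)] by simp_all
  have wK: "w K \<in> K" using orientation_head[OF w K] .
  show "descend \<I> w K \<le> descend \<I> w H"
  proof (cases "w K \<in> L")
    case True
    then have KL: "K \<inter> L \<in> \<I>" using intersection_edge[OF closed K L(1) wK] by blast
    have "descend \<I> w K \<le> w (K \<inter> L)" using descend_le[OF K KL] True wK by blast
    also have "w (K \<inter> L) \<le> w L" using desc L(1) KL wL unfolding subedge_descending_def by blast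
    finally show ?thesis using L(4) by simp
  next
    case False
    show ?thesis
    proof (cases "w K \<le> w L")
      case True
      then show ?thesis using descend_le_self[OF K] L(4) by simp
    next
      case False
      have "w L \<le> w H" using desc H L unfolding subedge_descending_def by blast
      have "w H < w K"
      proof (rule ccontr)
        assume "\<not> w H < w K"
        then have "w K \<in> L" using interval_edge_convex[OF iv L(1) wL(2) L(3), of "w K"] False by simp
        with \<open>w K \<notin> L\<close> show False ..
      qed
      then have "w H \<in> K" using interval_edge_convex[OF iv K wL(1) wK, of "w H"] \<open>w L \<le> w H\<close> by simp
      then have "w K \<le> w H" using desc H K \<open>K \<subseteq> H\<close> unfolding subedge_descending_def by blast
      with \<open>w H < w K\<close> show ?thesis by simp
    qed
  qed
qed

lemma two_cycle_free_if_descend_fixed: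
  assumes closed: "closed_under_intersection \<I>" and desc: "subedge_descending \<I> w" and fixed: "\<And>H. H \<in> \<I> \<Longrightarrow> descend \<I> w H = w H"
  shows "two_cycle_free \<I> w"
  unfolding two_cycle_free_def
proof (intro ballI impI)
  fix H K assume H: "H \<in> \<I>" and K: "K \<in> \<I>" and cross: "w H \<in> K" "w K \<in> H"
  have wH: "w H \<in> H" and wK: "w K \<in> K" using orientation_head[OF w] H K by blast+
  have HK: "H \<inter> K \<in> \<I>" using intersection_edge[OF closed H K wH cross(1)] .
  have "w H \<le> w (H \<inter> K)" using descend_le[OF H HK] fixed[OF H] wH cross by simp
  moreover have "w (H \<inter> K) \<le> w H" using desc H HK wH cross unfolding subedge_descending_def by blast
  moreover have "w K \<le> w (H \<inter> K)" using descend_le[OF K HK] fixed[OF K] wK cross by auto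
  moreover have "w (H \<inter> K) \<le> w K" using desc K HK wK cross unfolding subedge_descending_def by blast
  ultimately show "w H = w K" by simp
qed

end

lemma greatest_acyclic_below:
  assumes iv: "interval_hypergraph n \<I>" and closed: "closed_under_intersection \<I>"
  shows "w \<in> orientations \<I> \<Longrightarrow> subedge_descending \<I> w \<Longrightarrow>
    \<exists>u \<in> acyclic_orientations \<I>. pointwise_le \<I> u w \<and>
      (\<forall>P \<in> acyclic_orientations \<I>. pointwise_le \<I> P w \<longrightarrow> pointwise_le \<I> P u)"
proof (induction "\<Sum>H\<in>\<I>. w H" arbitrary: w rule: less_induct)
  case less
  note w = less.prems(1) and desc = less.prems(2)
  show ?case
  proof (cases "\<forall>H\<in>\<I>. descend \<I> w H = w H")
    case True
    then have "w \<in> acyclic_orientations \<I>"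
      using two_cycle_free_if_descend_fixed[OF iv w closed desc] w
      unfolding acyclic_orientations_eq[OF iv] by blast
    then show ?thesis unfolding pointwise_le_def by blast
  next
    case False
    then obtain H0 where H0: "H0 \<in> \<I>" "descend \<I> w H0 \<noteq> w H0" by blast
    have "(\<Sum>H\<in>\<I>. descend \<I> w H) < (\<Sum>H\<in>\<I>. w H)"
    proof (rule sum_strict_mono_ex1[OF finite_interval_hypergraph[OF iv]])
      show "\<forall>H\<in>\<I>. descend \<I> w H \<le> w H" using descend_le_self[OF iv w] by blast
      show "\<exists>H\<in>\<I>. descend \<I> w H < w H" using H0 descend_le_self[OF iv w H0(1)] by force
    qed
    then obtain u where u: "u \<in> acyclic_orientations \<I>" "pointwise_le \<I> u (descend \<I> w)"
      "\<forall>P \<in> acyclic_orientations \<I>. pointwise_le \<I> P (descend \<I> w) \<longrightarrow> pointwise_le \<I> P u"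
      using less.hyps descend_orientation[OF iv w] descend_subedge_descending[OF iv w closed desc]
      by blast
    have "pointwise_le \<I> (descend \<I> w) w"
      using descend_le_self[OF iv w] unfolding pointwise_le_def by blast
    then have "pointwise_le \<I> u w" using u(2) pointwise_le_trans by blast
    moreover have "pointwise_le \<I> P u"
      if "P \<in> acyclic_orientations \<I>" "pointwise_le \<I> P w" for P
    proof -
      have "P \<in> orientations \<I>" "two_cycle_free \<I> P"
        using that(1) unfolding acyclic_orientations_eq[OF iv] by blast+
      then have "pointwise_le \<I> P (descend \<I> w)"
        using le_descend_if_below[OF iv w] that(2) unfolding pointwise_le_def by blast
      then show ?thesis using u(3) that(1) by blast
    qed
    ultimately show ?thesis using u(1) by blast
  qed
qed

lemma finite_acyclic_orientations:
  assumes iv: "interval_hypergraph n \<I>"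
  shows "finite (acyclic_orientations \<I>)"
proof (rule finite_subset)
  show "acyclic_orientations \<I> \<subseteq> orientations \<I>"
    unfolding acyclic_orientations_eq[OF iv] by blast
  show "finite (orientations \<I>)"
    using finite_orientations finite_interval_hypergraph[OF iv] interval_edge_bounds(2)[OF iv] by blast
qed

lemma acyclic_orientations_glb:
  assumes iv: "interval_hypergraph n \<I>" and closed: "closed_under_intersection \<I>"
    and S: "S \<subseteq> acyclic_orientations \<I>" "S \<noteq> {}"
  shows "\<exists>m \<in> acyclic_orientations \<I>. (\<forall>u\<in>S. pointwise_le \<I> m u) \<and>
    (\<forall>P \<in> acyclic_orientations \<I>. (\<forall>u\<in>S. pointwise_le \<I> P u) \<longrightarrow> pointwise_le \<I> P m)"
proof -
  have S_acyclic: "u \<in> orientations \<I>" "two_cycle_free \<I> u" if "u \<in> S" for u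
    using S(1) that unfolding acyclic_orientations_eq[OF iv] by blast+
  have "finite S" using finite_subset[OF S(1) finite_acyclic_orientations[OF iv]] .
  define v where "v = restrict (\<lambda>H. Min ((\<lambda>u. u H) ` S)) \<I>"
  have v_attained: "\<exists>u\<in>S. v H = u H" if "H \<in> \<I>" for H
  proof -
    have "Min ((\<lambda>u. u H) ` S) \<in> (\<lambda>u. u H) ` S" using \<open>finite S\<close> S(2) by simp
    then show ?thesis using that unfolding v_def by auto
  qed
  have v_le: "v H \<le> u H" if "H \<in> \<I>" "u \<in> S" for H u
    using \<open>finite S\<close> that unfolding v_def by simp
  have v: "v \<in> orientations \<I>" unfolding orientations_def
  proof
    fix H assume "H \<in> \<I>"
    then show "v H \<in> H" using v_attained S_acyclic(1) orientation_head by metis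
  qed (simp add: v_def)
  have "subedge_descending \<I> v" unfolding subedge_descending_def
  proof (intro ballI impI)
    fix H K assume HK: "H \<in> \<I>" "K \<in> \<I>" "K \<subseteq> H" "v H \<in> K"
    then obtain u where u: "u \<in> S" "v H = u H" using v_attained by blast
    have "u K \<in> H" using orientation_head[OF S_acyclic(1)[OF u(1)] HK(2)] HK(3) by blast
    then have "u K = u H" using two_cycle_freeD[OF S_acyclic(2)[OF u(1)] HK(2,1)] HK(4) u(2) by simp
    then show "v K \<le> v H" using v_le[OF HK(2) u(1)] u(2) by simp
  qed
  then obtain m where m: "m \<in> acyclic_orientations \<I>" "pointwise_le \<I> m v"
    "\<forall>P \<in> acyclic_orientations \<I>. pointwise_le \<I> P v \<longrightarrow> pointwise_le \<I> P m"
    using greatest_acyclic_below[OF iv closed v] by blast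
  have "pointwise_le \<I> v u" if "u \<in> S" for u
    using v_le that unfolding pointwise_le_def by blast
  then have "\<forall>u\<in>S. pointwise_le \<I> m u" using m(2) pointwise_le_trans by blast
  moreover have "pointwise_le \<I> P v" if "\<forall>u\<in>S. pointwise_le \<I> P u" for P
    using that v_attained unfolding pointwise_le_def by fastforce
  ultimately show ?thesis using m(1,3) by blast
qed

lemma is_lattice_on_cong:
  assumes "\<And>x y. x \<in> A \<Longrightarrow> y \<in> A \<Longrightarrow> le x y \<longleftrightarrow> le' x y"
  shows "is_lattice_on A le \<longleftrightarrow> is_lattice_on A le'"
  unfolding is_lattice_on_def using assms by (simp cong: ball_cong_simp bex_cong)

lemma is_lattice_on_sup:
  "is_lattice_on A le \<Longrightarrow> x \<in> A \<Longrightarrow> y \<in> A \<Longrightarrow>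
    \<exists>s\<in>A. le x s \<and> le y s \<and> (\<forall>u\<in>A. le x u \<longrightarrow> le y u \<longrightarrow> le s u)"
  unfolding is_lattice_on_def by blast

lemma is_lattice_onI_glb:
  assumes refl: "\<And>x. x \<in> A \<Longrightarrow> le x x"
    and trans: "\<And>x y z. x \<in> A \<Longrightarrow> y \<in> A \<Longrightarrow> z \<in> A \<Longrightarrow> le x y \<Longrightarrow> le y z \<Longrightarrow> le x z"
    and antisym: "\<And>x y. x \<in> A \<Longrightarrow> y \<in> A \<Longrightarrow> le x y \<Longrightarrow> le y x \<Longrightarrow> x = y"
    and top: "t \<in> A" "\<And>x. x \<in> A \<Longrightarrow> le x t"
    and glb: "\<And>S. S \<subseteq> A \<Longrightarrow> S \<noteq> {} \<Longrightarrow>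
                \<exists>m\<in>A. (\<forall>x\<in>S. le m x) \<and> (\<forall>u\<in>A. (\<forall>x\<in>S. le u x) \<longrightarrow> le u m)"
  shows "is_lattice_on A le"
  unfolding is_lattice_on_def
proof (intro conjI ballI impI)
  fix x y assume xy: "x \<in> A" "y \<in> A"
  show "\<exists>m\<in>A. le m x \<and> le m y \<and> (\<forall>u\<in>A. le u x \<longrightarrow> le u y \<longrightarrow> le u m)"
    using glb[of "{x, y}"] xy by auto
  define U where "U = {u \<in> A. le x u \<and> le y u}"
  have "U \<subseteq> A" "U \<noteq> {}" using top xy unfolding U_def by auto
  then obtain s where s: "s \<in> A" "\<forall>u\<in>U. le s u" "\<forall>v\<in>A. (\<forall>u\<in>U. le v u) \<longrightarrow> le v s"
    using glb by blast
  have "le x s" "le y s" using s(3) xy unfolding U_def by auto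
  then show "\<exists>s\<in>A. le x s \<and> le y s \<and> (\<forall>u\<in>A. le x u \<longrightarrow> le y u \<longrightarrow> le s u)"
    using s(1,2) unfolding U_def by blast
qed (use refl trans antisym in blast)+

lemma max_orientation_acyclic:
  assumes iv: "interval_hypergraph n \<I>"
  shows "restrict Max \<I> \<in> acyclic_orientations \<I>"
proof -
  have "Max H \<in> H" if "H \<in> \<I>" for H
    using interval_edge_bounds(2,3)[OF iv that] by (rule Max_in)
  moreover have "Max H = Max K" if "H \<in> \<I>" "K \<in> \<I>" "Max H \<in> K" "Max K \<in> H" for H K
    using that interval_edge_bounds(2)[OF iv] by (simp add: order_antisym)
  ultimately show ?thesis
    unfolding acyclic_orientations_eq[OF iv] orientations_def two_cycle_free_def by auto
qed

lemma le_max_orientation: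
  assumes iv: "interval_hypergraph n \<I>" and P: "P \<in> acyclic_orientations \<I>"
  shows "pointwise_le \<I> P (restrict Max \<I>)"
  unfolding pointwise_le_def
proof
  fix H assume H: "H \<in> \<I>"
  have "P H \<in> H" using P H orientation_head unfolding acyclic_orientations_eq[OF iv] by blast
  then show "P H \<le> restrict Max \<I> H" using H interval_edge_bounds(2)[OF iv H] by simp
qed

lemma lattice_if_closed_under_intersection:
  assumes iv: "interval_hypergraph n \<I>" and closed: "closed_under_intersection \<I>"
  shows "is_lattice_on (acyclic_orientations \<I>) (pointwise_le \<I>)"
proof (rule is_lattice_onI_glb[where t = "restrict Max \<I>"])
  show "pointwise_le \<I> P P" for P :: "nat set \<Rightarrow> nat" unfolding pointwise_le_def by simp
  show "pointwise_le \<I> P R" if "pointwise_le \<I> P Q" "pointwise_le \<I> Q R" for P Q R :: "nat set \<Rightarrow> nat"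
    using that by (rule pointwise_le_trans)
  show "P = Q" if "P \<in> acyclic_orientations \<I>" "Q \<in> acyclic_orientations \<I>"
    "pointwise_le \<I> P Q" "pointwise_le \<I> Q P" for P Q
    using that orientations_eqI[of P \<I> Q] unfolding acyclic_orientations_eq[OF iv] pointwise_le_def
    by (simp add: order_antisym)
  show "restrict Max \<I> \<in> acyclic_orientations \<I>" using iv by (rule max_orientation_acyclic)
  show "pointwise_le \<I> P (restrict Max \<I>)" if "P \<in> acyclic_orientations \<I>" for P
    using iv that by (rule le_max_orientation)
  show "\<exists>m \<in> acyclic_orientations \<I>. (\<forall>u\<in>S. pointwise_le \<I> m u) \<and>
    (\<forall>P \<in> acyclic_orientations \<I>. (\<forall>u\<in>S. pointwise_le \<I> P u) \<longrightarrow> pointwise_le \<I> P m)"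
    if "S \<subseteq> acyclic_orientations \<I>" "S \<noteq> {}" for S
    using iv closed that by (rule acyclic_orientations_glb)
qed

section \<open>Crossing edges obstruct joins\<close>

definition endpoint_orientation :: "'a::linorder set set \<Rightarrow> ('a \<Rightarrow> 'a \<Rightarrow> 'a) \<Rightarrow> 'a set \<Rightarrow> 'a" where
  "endpoint_orientation \<I> g = restrict (\<lambda>H. g (Min H) (Max H)) \<I>"

lemma endpoint_orientation_apply:
  "H \<in> \<I> \<Longrightarrow> endpoint_orientation \<I> g H = g (Min H) (Max H)"
  unfolding endpoint_orientation_def by simp

lemma endpoint_orientation_acyclic:
  assumes iv: "interval_hypergraph n \<I>"
    and head: "\<And>h1 h2. h1 \<le> h2 \<Longrightarrow> g h1 h2 \<in> {h1..h2}"
    and no_two_cycle: "\<And>h1 h2 k1 k2. h1 \<le> h2 \<Longrightarrow> k1 \<le> k2 \<Longrightarrow>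
       g h1 h2 \<in> {k1..k2} \<Longrightarrow> g k1 k2 \<in> {h1..h2} \<Longrightarrow> g h1 h2 = g k1 k2"
  shows "endpoint_orientation \<I> g \<in> acyclic_orientations \<I>"
proof -
  have ends: "Min H \<le> Max H" "{Min H..Max H} = H" if "H \<in> \<I>" for H
    using interval_edge_bounds(4,5)[OF iv that] by simp_all
  have "endpoint_orientation \<I> g \<in> orientations \<I>"
    unfolding orientations_def
  proof
    fix H assume H: "H \<in> \<I>"
    show "endpoint_orientation \<I> g H \<in> H"
      using head[OF ends(1)[OF H]] unfolding endpoint_orientation_apply[OF H] ends(2)[OF H] .
  qed (simp add: endpoint_orientation_def)
  moreover have "two_cycle_free \<I> (endpoint_orientation \<I> g)"
    unfolding two_cycle_free_def
  proof (intro ballI impI)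
    fix H K assume H: "H \<in> \<I>" and K: "K \<in> \<I>"
      and "endpoint_orientation \<I> g H \<in> K" "endpoint_orientation \<I> g K \<in> H"
    then show "endpoint_orientation \<I> g H = endpoint_orientation \<I> g K"
      using no_two_cycle[OF ends(1)[OF H] ends(1)[OF K]]
      unfolding endpoint_orientation_apply[OF H] endpoint_orientation_apply[OF K]
        ends(2)[OF H] ends(2)[OF K] by blast
  qed
  ultimately show ?thesis unfolding acyclic_orientations_eq[OF iv] by blast
qed

lemma pointwise_le_endpoint_orientation:
  assumes iv: "interval_hypergraph n \<I>"
    and le: "\<And>h1 h2. h1 \<le> h2 \<Longrightarrow> {h1..h2} \<in> \<I> \<Longrightarrow> f h1 h2 \<le> g h1 h2"
  shows "pointwise_le \<I> (endpoint_orientation \<I> f) (endpoint_orientation \<I> g)"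
  unfolding pointwise_le_def
proof
  fix H assume H: "H \<in> \<I>"
  have "{Min H..Max H} \<in> \<I>" using H by (simp only: interval_edge_bounds(5)[OF iv H, symmetric])
  then show "endpoint_orientation \<I> f H \<le> endpoint_orientation \<I> g H"
    unfolding endpoint_orientation_apply[OF H] by (rule le[OF interval_edge_bounds(4)[OF iv H]])
qed

lemma not_lattice_if_crossing:
  assumes iv: "interval_hypergraph n \<I>"
    and I: "{a..b} \<in> \<I>" and J: "{c..d} \<in> \<I>" and crossing: "a < c" "c < b" "b < d"
    and missing: "{c..b} \<notin> \<I>"
  shows "\<not> is_lattice_on (acyclic_orientations \<I>) (pointwise_le \<I>)"
proof
  assume lattice: "is_lattice_on (acyclic_orientations \<I>) (pointwise_le \<I>)"
  define P where "P = endpoint_orientation \<I> (\<lambda>h1 h2. if h1 \<le> c \<and> c \<le> h2 then c else h1)"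
  define Q where "Q = endpoint_orientation \<I> (\<lambda>h1 h2.
    if h1 < c \<and> a \<le> h2 then max h1 a else if h1 \<le> b \<and> b \<le> h2 then b else h1)"
  define X where "X = endpoint_orientation \<I> (\<lambda>h1 h2.
    if h1 \<le> d \<and> d \<le> h2 then d else if h2 \<le> b \<and> h1 \<le> c \<and> c \<le> h2 then c else h2)"
  define Y where "Y = endpoint_orientation \<I> (\<lambda>h1 h2. if h1 \<le> b \<and> b \<le> h2 then b else h2)"
  have acyclic: "P \<in> acyclic_orientations \<I>" "Q \<in> acyclic_orientations \<I>"
    "X \<in> acyclic_orientations \<I>" "Y \<in> acyclic_orientations \<I>"
    unfolding P_def Q_def X_def Y_def using crossing
    by (intro endpoint_orientation_acyclic[OF iv]; auto split: if_splits)+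
  (* Q is below X except on {c..b}, which is not an edge. *)
  have upper: "pointwise_le \<I> P X" "pointwise_le \<I> P Y" "pointwise_le \<I> Q X" "pointwise_le \<I> Q Y"
    unfolding P_def Q_def X_def Y_def using crossing missing
    by (intro pointwise_le_endpoint_orientation[OF iv]; auto split: if_splits)+
  obtain s where s: "s \<in> acyclic_orientations \<I>" "pointwise_le \<I> P s" "pointwise_le \<I> Q s"
    "\<forall>u \<in> acyclic_orientations \<I>. pointwise_le \<I> P u \<longrightarrow> pointwise_le \<I> Q u \<longrightarrow> pointwise_le \<I> s u"
    using is_lattice_on_sup[OF lattice acyclic(1,2)] by blast
  have "pointwise_le \<I> s X" "pointwise_le \<I> s Y" using s(4) acyclic(3,4) upper by blast+
  have ends: "Min {a..b} = a" "Max {a..b} = b" "Min {c..d} = c" "Max {c..d} = d"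
    using crossing by (simp_all add: Min_Max_atLeastAtMost)
  have "P {a..b} = c" "X {a..b} = c" "Q {c..d} = b" "Y {c..d} = b"
    unfolding P_def Q_def X_def Y_def using I J ends crossing by (simp_all add: endpoint_orientation_apply)
  then have "s {a..b} = c" "s {c..d} = b"
    using s(2,3) \<open>pointwise_le \<I> s X\<close> \<open>pointwise_le \<I> s Y\<close> I J unfolding pointwise_le_def
    by (metis order_antisym)+
  moreover have "two_cycle_free \<I> s" using s(1) unfolding acyclic_orientations_eq[OF iv] by blast
  ultimately show False using two_cycle_freeD[of \<I> s "{a..b}" "{c..d}"] I J crossing by simp
qed

lemma crossing_if_intersection_missing:
  assumes iv: "interval_hypergraph n \<I>" and singletons: "contains_singletons n \<I>"
    and I: "{a1..b1} \<in> \<I>" and J: "{a2..b2} \<in> \<I>" and "a1 \<le> a2"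
    and meet: "{a1..b1} \<inter> {a2..b2} \<noteq> {}" "{a1..b1} \<inter> {a2..b2} \<notin> \<I>"
  shows "a1 < a2 \<and> a2 < b1 \<and> b1 < b2 \<and> {a2..b1} \<notin> \<I>"
proof -
  have "b1 < b2"
  proof (rule ccontr)
    assume "\<not> b1 < b2"
    then have "{a1..b1} \<inter> {a2..b2} = {a2..b2}" using \<open>a1 \<le> a2\<close> by auto
    with J meet(2) show False by metis
  qed
  moreover have "a1 < a2"
  proof (rule ccontr)
    assume "\<not> a1 < a2"
    then have "{a1..b1} \<inter> {a2..b2} = {a1..b1}" using \<open>a1 \<le> a2\<close> \<open>b1 < b2\<close> by auto
    with I meet(2) show False by metis
  qed
  moreover have "a2 \<le> b1" using meet(1) by auto
  moreover have meet_eq: "{a1..b1} \<inter> {a2..b2} = {a2..b1}" using calculation by auto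
  moreover have "a2 \<noteq> b1"
  proof
    assume "a2 = b1"
    moreover have "a2 \<in> {1..n}" using interval_edge_bounds(1)[OF iv J] \<open>b1 < b2\<close> \<open>a2 \<le> b1\<close> by auto
    ultimately show False using singletons meet(2) meet_eq unfolding contains_singletons_def by auto
  qed
  ultimately show ?thesis using meet(2) by simp
qed

lemma closed_under_intersection_if_lattice:
  assumes iv: "interval_hypergraph n \<I>" and singletons: "contains_singletons n \<I>"
    and lattice: "is_lattice_on (acyclic_orientations \<I>) (pointwise_le \<I>)"
  shows "closed_under_intersection \<I>"
  unfolding closed_under_intersection_def
proof (intro ballI impI)
  fix I J assume I: "I \<in> \<I>" and J: "J \<in> \<I>" and "I \<inter> J \<noteq> {}"
  show "I \<inter> J \<in> \<I>"
  proof (rule ccontr)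
    assume "I \<inter> J \<notin> \<I>"
    have crossing_false: False
      if "{a1..b1} \<in> \<I>" "{a2..b2} \<in> \<I>" "a1 \<le> a2"
        "{a1..b1} \<inter> {a2..b2} \<noteq> {}" "{a1..b1} \<inter> {a2..b2} \<notin> \<I>" for a1 b1 a2 b2
      using crossing_if_intersection_missing[OF iv singletons that]
        not_lattice_if_crossing[OF iv that(1,2)] lattice by blast
    obtain a1 b1 a2 b2 where "I = {a1..b1}" "J = {a2..b2}"
      using interval_edge[OF iv I] interval_edge[OF iv J] by blast
    then show False
      using crossing_false I J \<open>I \<inter> J \<noteq> {}\<close> \<open>I \<inter> J \<notin> \<I>\<close>
      by (metis Int_commute nat_le_linear)
  qed
qed

theorem theoremA:
  fixes n :: nat and \<I> :: "nat set set"
  assumes "n \<ge> 1"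
    and "interval_hypergraph n \<I>"
    and "contains_singletons n \<I>"
  shows "hypergraphic_poset_is_lattice n \<I> \<longleftrightarrow> closed_under_intersection \<I>"
proof -
  have "hypergraphic_poset_is_lattice n \<I> \<longleftrightarrow>
        is_lattice_on (acyclic_orientations \<I>) (pointwise_le \<I>)"
    unfolding hypergraphic_poset_is_lattice_def
    by (rule is_lattice_on_cong) (rule hg_le_iff_pointwise_le[OF assms(2)])
  then show ?thesis
    using lattice_if_closed_under_intersection[OF assms(2)]
      closed_under_intersection_if_lattice[OF assms(2,3)] by blast
qed

end
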